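(* Suppose there is a norm $\|\cdot\|$ on $\mathbb R^n$ and constants $q\in(1,2]$, $L>0$ such that $f$ is $q$-uniformly smooth on $\mathrm{dom}(\Psi)$ with constant $L$, and let $p\ge2$, $\mu>0$. (a) If $\Psi$ is $p$-uniformly convex on $\mathrm{dom}(\Psi)$ with constant $\mu$, then $(\mathcal D,\mathrm{gap})$ satisfies the $(q,r)$-growth property with $r=q/p$ and $M=L(p/\mu)^{q/p}$. (b) If $\Psi=\delta_C$ for a closed convex set $C\subseteq\mathbb R^n$ that is $p$-uniformly convex with constant $\mu$, and $\ell:=\inf_{x\in C}\|\nabla f(x)\|^*>0$, then $(\mathcal D,\mathrm{gap})$ satisfies the $(q,r)$-growth property with $r=q/p$ and $M=L(p/(\ell\mu))^{q/p}$.
   Context: Let $f,\Psi:\mathbb{R}^n\to\mathbb{R}\cup\{\infty\}$ be closed proper convex functions such that (A1) $f$ is differentiable on $\mathrm{dom}(\Psi)$, and (A2) for every $x\in\mathrm{dom}(f)$ the set $\arg\min_s\{\langle\nabla f(x),s\rangle+\Psi(s)\}$ is nonempty. $f^*,\Psi^*$ denote convex conjugates; $\arg\min_y\{\langle g,y\rangle+\Psi(y)\}=\partial\Psi^*(-g)$. $D_f(y,x)=f(y)-f(x)-\langle\nabla f(x),y-x\rangle$. $\mathrm{gap}(x,u)=f(x)+\Psi(x)+f^*(u)+\Psi^*(-u)$. $\mathcal{D}(x,s,\theta)=D_f(x+\theta(s-x),x)+\Psi(x+\theta(s-x))-(1-\theta)\Psi(x)-\theta\Psi(s)$. $\|\cdot\|^*$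 is the dual norm. $(q,r)$-growth property: there is a finite $M>0$ such that for all $x\in\mathrm{dom}(\Psi)$, $g=\nabla f(x)$, $s\in\partial\Psi^*(-g)$: $\mathcal D(x,s,\theta)\le\frac{M\theta^q}{q}\mathrm{gap}(x,g)^r$ for all $\theta\in[0,1]$. $f$ is $q$-uniformly smooth on $C$ with constant $L$ if for all $x,y\in C$, $\theta\in[0,1]$: $f(x+\theta(y-x))\ge(1-\theta)f(x)+\theta f(y)-\frac Lq\theta(1-\theta)\|y-x\|^q$. $\Psi$ is $p$-uniformly convex on $C$ with constant $\mu$ if for all $x,y\in C$, $\theta\in[0,1]$: $\Psi(x+\theta(y-x))\le(1-\theta)\Psi(x)+\theta\Psi(y)-\frac\mu p\theta(1-\theta)\|y-x\|^p$. A closed convex set $C$ is $p$-uniformly convex with constant $\mu$ if for all $x,y\in C$, $\theta\in[0,1]$ and $\|z\|\le1$: $x+\theta(y-x)+\frac\mu p\theta(1-\theta)\|y-x\|^pz\in C$. *)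

theory Defs
  imports "HOL-Analysis.Analysis"
begin

definition edom :: "(real^'n::finite \<Rightarrow> ereal) \<Rightarrow> (real^'n) set" where
  "edom f = {x. f x < \<infinity>}"

definition epigraph :: "(real^'n::finite \<Rightarrow> ereal) \<Rightarrow> ((real^'n) \<times> real) set" where
  "epigraph f = {(x, t). f x \<le> ereal t}"

definition closed_proper_convex :: "(real^'n::finite \<Rightarrow> ereal) \<Rightarrow> bool" where
  "closed_proper_convex f \<longleftrightarrow>
     closed (epigraph f) \<and> convex (epigraph f) \<and>
     (\<forall>x. f x \<noteq> -\<infinity>) \<and> (\<exists>x. f x < \<infinity>)"

definition is_norm :: "(real^'n::finite \<Rightarrow> real) \<Rightarrow> bool" where
  "is_norm N \<longleftrightarrow> (\<forall>x. 0 \<le> N x) \<and> (\<forall>x. N x = 0 \<longleftrightarrow> x = 0) \<and>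
     (\<forall>c x. N (c *\<^sub>R x) = \<bar>c\<bar> * N x) \<and> (\<forall>x y. N (x + y) \<le> N x + N y)"

definition dual_norm :: "(real^'n::finite \<Rightarrow> real) \<Rightarrow> real^'n \<Rightarrow> real" where
  "dual_norm N g = Sup {g \<bullet> x | x. N x \<le> 1}"

definition conj :: "(real^'n::finite \<Rightarrow> ereal) \<Rightarrow> real^'n \<Rightarrow> ereal" where
  "conj f u = (SUP x. ereal (u \<bullet> x) - f x)"

definition esubdiff :: "(real^'n::finite \<Rightarrow> ereal) \<Rightarrow> real^'n \<Rightarrow> (real^'n) set" where
  "esubdiff h u = {s. \<bar>h u\<bar> \<noteq> \<infinity> \<and> (\<forall>v. h u + ereal ((v - u) \<bullet> s) \<le> h v)}"

definition indicator_fn :: "(real^'n::finite) set \<Rightarrow> real^'n \<Rightarrow> ereal" where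
  "indicator_fn C x = (if x \<in> C then 0 else \<infinity>)"

definition bregman :: "(real^'n::finite \<Rightarrow> ereal) \<Rightarrow> (real^'n \<Rightarrow> real^'n) \<Rightarrow> real^'n \<Rightarrow> real^'n \<Rightarrow> ereal" where
  "bregman f gradf y x = f y - f x - ereal (gradf x \<bullet> (y - x))"

definition gap :: "(real^'n::finite \<Rightarrow> ereal) \<Rightarrow> (real^'n \<Rightarrow> ereal) \<Rightarrow> real^'n \<Rightarrow> real^'n \<Rightarrow> ereal" where
  "gap f \<Psi> x u = f x + \<Psi> x + conj f u + conj \<Psi> (-u)"

definition Dcal :: "(real^'n::finite \<Rightarrow> ereal) \<Rightarrow> (real^'n \<Rightarrow> real^'n) \<Rightarrow> (real^'n \<Rightarrow> ereal)
     \<Rightarrow> real^'n \<Rightarrow> real^'n \<Rightarrow> real \<Rightarrow> ereal" where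
  "Dcal f gradf \<Psi> x s \<theta> =
     bregman f gradf (x + \<theta> *\<^sub>R (s - x)) x + \<Psi> (x + \<theta> *\<^sub>R (s - x))
     - ereal (1 - \<theta>) * \<Psi> x - ereal \<theta> * \<Psi> s"

text \<open>Power of a nonnegative extended real (infinity stays infinity for positive exponent).\<close>

definition epowr :: "ereal \<Rightarrow> real \<Rightarrow> ereal" where
  "epowr a r = (if a = \<infinity> then \<infinity> else ereal (real_of_ereal a powr r))"

definition growth_property ::
  "(real^'n::finite \<Rightarrow> ereal) \<Rightarrow> (real^'n \<Rightarrow> real^'n) \<Rightarrow> (real^'n \<Rightarrow> ereal) \<Rightarrow> real \<Rightarrow> real \<Rightarrow> real \<Rightarrow> bool" where
  "growth_property f gradf \<Psi> q r M \<longleftrightarrow>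
     (\<forall>x \<in> edom \<Psi>. \<forall>s \<in> esubdiff (conj \<Psi>) (- gradf x). \<forall>\<theta> \<in> {0..1}.
        Dcal f gradf \<Psi> x s \<theta> \<le> ereal (M * \<theta> powr q / q) * epowr (gap f \<Psi> x (gradf x)) r)"

definition uniformly_smooth_on ::
  "(real^'n::finite \<Rightarrow> real) \<Rightarrow> real \<Rightarrow> real \<Rightarrow> (real^'n) set \<Rightarrow> (real^'n \<Rightarrow> ereal) \<Rightarrow> bool" where
  "uniformly_smooth_on N q L C f \<longleftrightarrow>
     (\<forall>x\<in>C. \<forall>y\<in>C. \<forall>\<theta>\<in>{0..1}.
        ereal (1 - \<theta>) * f x + ereal \<theta> * f y - ereal (L / q * \<theta> * (1 - \<theta>) * N (y - x) powr q)
          \<le> f (x + \<theta> *\<^sub>R (y - x)))"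

definition uniformly_convex_fn_on ::
  "(real^'n::finite \<Rightarrow> real) \<Rightarrow> real \<Rightarrow> real \<Rightarrow> (real^'n) set \<Rightarrow> (real^'n \<Rightarrow> ereal) \<Rightarrow> bool" where
  "uniformly_convex_fn_on N p \<mu> C \<Psi> \<longleftrightarrow>
     (\<forall>x\<in>C. \<forall>y\<in>C. \<forall>\<theta>\<in>{0..1}.
        \<Psi> (x + \<theta> *\<^sub>R (y - x))
          \<le> ereal (1 - \<theta>) * \<Psi> x + ereal \<theta> * \<Psi> y - ereal (\<mu> / p * \<theta> * (1 - \<theta>) * N (y - x) powr p))"

definition uniformly_convex_set ::
  "(real^'n::finite \<Rightarrow> real) \<Rightarrow> real \<Rightarrow> real \<Rightarrow> (real^'n) set \<Rightarrow> bool" where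
  "uniformly_convex_set N p \<mu> C \<longleftrightarrow> closed C \<and> convex C \<and>
     (\<forall>x\<in>C. \<forall>y\<in>C. \<forall>\<theta>\<in>{0..1}. \<forall>z. N z \<le> 1 \<longrightarrow>
        x + \<theta> *\<^sub>R (y - x) + (\<mu> / p * \<theta> * (1 - \<theta>) * N (y - x) powr p) *\<^sub>R z \<in> C)"

end

theory Submission
  imports Defs
begin

text \<open>Let \<open>s\<close> minimise \<open>\<langle>g, \<cdot>\<rangle> + \<Psi>\<close> for \<open>g = \<nabla>f(x)\<close>. By Fenchel--Young,
  \<open>gap(x, g) \<ge> \<Psi>(x) - \<Psi>(s) + \<langle>g, x - s\<rangle> =: a\<close>, and uniform smoothness of \<open>f\<close> together with
  convexity of \<open>\<Psi>\<close> gives \<open>\<D>(x, s, \<theta>) \<le> (L/q) \<theta>\<^sup>q \<parallel>s - x\<parallel>\<^sup>q\<close>. It therefore suffices to show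
  \<open>\<parallel>s - x\<parallel>\<^sup>p \<le> K a\<close> with \<open>K = p/\<mu>\<close> (resp. \<open>K = p/(\<ell>\<mu>)\<close>) and to raise it to the power \<open>q/p\<close>.
  For this, compare \<open>s\<close> with the points \<open>s + \<eta>(x - s)\<close>: uniform convexity gains
  \<open>(\<mu>/p) \<eta>(1 - \<eta>) \<parallel>x - s\<parallel>\<^sup>p\<close> over the chord, optimality of \<open>s\<close> turns this into
  \<open>(1 - \<eta>)(\<mu>/p) \<parallel>x - s\<parallel>\<^sup>p \<le> a\<close>, and \<open>\<eta> \<rightarrow> 0\<close> finishes.\<close>

lemma is_norm_minus: "is_norm N \<Longrightarrow> N (- x) = N x"
  unfolding is_norm_def by (metis abs_minus_cancel abs_one mult_1 scaleR_minus1_left)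

lemma is_norm_zero: "is_norm N \<Longrightarrow> N 0 = 0"
  unfolding is_norm_def by blast

lemma is_norm_minus_commute: "is_norm N \<Longrightarrow> N (x - y) = N (y - x)"
  by (metis is_norm_minus minus_diff_eq)

lemma is_norm_sum:
  assumes "is_norm N" "finite A"
  shows "N (sum h A) \<le> (\<Sum>i\<in>A. N (h i))"
  using assms(2)
proof (induction A rule: finite_induct)
  case empty
  then show ?case using is_norm_zero[OF assms(1)] by simp
next
  case (insert a A)
  then show ?case using assms(1) unfolding is_norm_def by (smt (verit) sum.insert)
qed

lemma is_norm_le_euclidean:
  fixes N :: "real^'n::finite \<Rightarrow> real"
  assumes "is_norm N"
  shows "N x \<le> (\<Sum>b\<in>Basis. N b) * norm x"
proof -
  have "N x = N (\<Sum>b\<in>Basis. (x \<bullet> b) *\<^sub>R b)" by (simp add: euclidean_representation)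
  also have "\<dots> \<le> (\<Sum>b\<in>Basis. N ((x \<bullet> b) *\<^sub>R b))" by (rule is_norm_sum[OF assms]) simp
  also have "\<dots> = (\<Sum>b\<in>Basis. \<bar>x \<bullet> b\<bar> * N b)" using assms unfolding is_norm_def by simp
  also have "\<dots> \<le> (\<Sum>b\<in>Basis. norm x * N b)"
    using Basis_le_norm assms unfolding is_norm_def by (intro sum_mono mult_right_mono) auto
  finally show ?thesis by (simp add: sum_distrib_left mult.commute)
qed

lemma is_norm_continuous_on:
  fixes N :: "real^'n::finite \<Rightarrow> real"
  assumes "is_norm N"
  shows "continuous_on S N"
proof -
  let ?K = "\<Sum>b\<in>Basis. N b"
  have tri: "\<And>u v. N (u + v) \<le> N u + N v" using assms unfolding is_norm_def by blast
  have "lipschitz_on ?K S N"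
  proof (rule lipschitz_onI)
    fix x y :: "real^'n"
    have "N x \<le> N y + N (x - y)" using tri[of y "x - y"] by simp
    moreover have "N y \<le> N x + N (x - y)"
      using tri[of x "y - x"] is_norm_minus_commute[OF assms, of x y] by simp
    ultimately show "dist (N x) (N y) \<le> ?K * dist x y"
      using is_norm_le_euclidean[OF assms, of "x - y"] by (simp add: dist_real_def dist_norm)
  next
    show "0 \<le> ?K" using assms unfolding is_norm_def by (simp add: sum_nonneg)
  qed
  then show ?thesis by (rule lipschitz_on_continuous_on)
qed

lemma is_norm_ge_euclidean:
  fixes N :: "real^'n::finite \<Rightarrow> real"
  assumes "is_norm N"
  obtains c where "c > 0" "\<And>x. c * norm x \<le> N x"
proof -
  let ?S = "sphere (0::real^'n) 1"
  obtain b :: "real^'n" where "b \<in> Basis" using nonempty_Basis by blast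
  then have "?S \<noteq> {}" by (metis mem_sphere_0 norm_Basis empty_iff)
  then obtain x0 where x0: "x0 \<in> ?S" "\<And>y. y \<in> ?S \<Longrightarrow> N x0 \<le> N y"
    using continuous_attains_inf[OF compact_sphere _ is_norm_continuous_on[OF assms]] by metis
  have "N x0 > 0" using x0(1) assms unfolding is_norm_def by (metis less_eq_real_def norm_zero mem_sphere_0 zero_neq_one)
  moreover have "N x0 * norm x \<le> N x" for x
  proof (cases "x = 0")
    case True then show ?thesis using assms unfolding is_norm_def by auto
  next
    case False
    then have "N x0 \<le> N ((1 / norm x) *\<^sub>R x)" by (intro x0(2)) simp
    also have "\<dots> = N x / norm x" using assms unfolding is_norm_def by simp
    finally show ?thesis using False by (simp add: field_simps)
  qed
  ultimately show ?thesis by (rule that)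
qed

lemma bdd_above_dual_norm:
  fixes N :: "real^'n::finite \<Rightarrow> real"
  assumes "is_norm N"
  shows "bdd_above {g \<bullet> x | x. N x \<le> 1}"
proof -
  obtain c where c: "c > 0" "\<And>x. c * norm x \<le> N x" using is_norm_ge_euclidean[OF assms] by blast
  have "g \<bullet> x \<le> norm g / c" if "N x \<le> 1" for x
  proof -
    have "norm x \<le> 1 / c" using c order_trans[OF c(2) that] by (simp add: pos_le_divide_eq mult.commute)
    then have "norm g * norm x \<le> norm g / c" by (metis mult_left_mono norm_ge_zero times_divide_eq_right mult_1_right)
    then show ?thesis using norm_cauchy_schwarz[of g x] by linarith
  qed
  then show ?thesis by (auto intro!: bdd_aboveI)
qed

lemma dual_norm_nonneg:
  fixes N :: "real^'n::finite \<Rightarrow> real"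
  assumes "is_norm N"
  shows "0 \<le> dual_norm N g"
proof -
  have "N 0 \<le> 1" using is_norm_zero[OF assms] by simp
  then have "g \<bullet> 0 \<le> dual_norm N g"
    unfolding dual_norm_def by (intro cSup_upper bdd_above_dual_norm[OF assms]) blast
  then show ?thesis by simp
qed

lemma dual_norm_least:
  assumes "is_norm N" "\<And>z. N z \<le> 1 \<Longrightarrow> g \<bullet> z \<le> c"
  shows "dual_norm N g \<le> c"
proof -
  have "N 0 \<le> 1" using is_norm_zero[OF assms(1)] by simp
  then show ?thesis unfolding dual_norm_def using assms(2) by (intro cSup_least) auto
qed

lemma closed_proper_convex_neq_MInf: "closed_proper_convex \<Psi> \<Longrightarrow> \<Psi> x \<noteq> -\<infinity>"
  unfolding closed_proper_convex_def by blast

lemma closed_proper_convex_finite: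
  assumes "closed_proper_convex \<Psi>" "x \<in> edom \<Psi>"
  shows "\<Psi> x = ereal (real_of_ereal (\<Psi> x))"
  using assms unfolding closed_proper_convex_def edom_def by (cases "\<Psi> x") auto

lemma closed_proper_convex_segment_le:
  assumes "closed_proper_convex \<Psi>" "\<Psi> x = ereal a" "\<Psi> y = ereal b" "0 \<le> \<theta>" "\<theta> \<le> 1"
  shows "\<Psi> (x + \<theta> *\<^sub>R (y - x)) \<le> ereal ((1 - \<theta>) * a + \<theta> * b)"
proof -
  have cv: "convex (epigraph \<Psi>)" using assms(1) unfolding closed_proper_convex_def by blast
  have "(x, a) \<in> epigraph \<Psi>" "(y, b) \<in> epigraph \<Psi>" using assms unfolding epigraph_def by auto
  from convexD[OF cv this, of "1 - \<theta>" \<theta>] assms(4,5)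
  have "((1 - \<theta>) *\<^sub>R x + \<theta> *\<^sub>R y, (1 - \<theta>) * a + \<theta> * b) \<in> epigraph \<Psi>" by simp
  moreover have "(1 - \<theta>) *\<^sub>R x + \<theta> *\<^sub>R y = x + \<theta> *\<^sub>R (y - x)" by (simp add: algebra_simps)
  ultimately show ?thesis unfolding epigraph_def by simp
qed

lemma edom_segment:
  assumes "closed_proper_convex \<Psi>" "x \<in> edom \<Psi>" "y \<in> edom \<Psi>" "0 \<le> \<theta>" "\<theta> \<le> 1"
  shows "x + \<theta> *\<^sub>R (y - x) \<in> edom \<Psi>"
proof -
  have "\<Psi> (x + \<theta> *\<^sub>R (y - x)) \<le> ereal ((1 - \<theta>) * real_of_ereal (\<Psi> x) + \<theta> * real_of_ereal (\<Psi> y))"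
    using assms closed_proper_convex_finite by (intro closed_proper_convex_segment_le) auto
  also have "\<dots> < \<infinity>" by simp
  finally show ?thesis unfolding edom_def by simp
qed

lemma conj_le_ereal:
  assumes "\<And>y r. \<Psi> y = ereal r \<Longrightarrow> u \<bullet> y - r \<le> c" "\<And>y. \<Psi> y \<noteq> -\<infinity>"
  shows "conj \<Psi> u \<le> ereal c"
  unfolding conj_def
proof (rule SUP_least)
  fix y
  show "ereal (u \<bullet> y) - \<Psi> y \<le> ereal c"
    using assms(1)[of y] assms(2)[of y] by (cases "\<Psi> y") auto
qed

lemma fenchel_young: "\<Psi> y = ereal r \<Longrightarrow> ereal (u \<bullet> y - r) \<le> conj \<Psi> u"
  unfolding conj_def by (rule SUP_upper2[of y]) auto

lemma epigraph_separation:
  assumes cpc: "closed_proper_convex \<Psi>" and "\<not> \<Psi> s \<le> ereal t"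
  shows "\<exists>c a b. 0 \<le> c \<and> a \<bullet> s + c * t < b \<and> (\<forall>y r. \<Psi> y \<le> ereal r \<longrightarrow> b < a \<bullet> y + c * r)"
proof -
  have cl: "closed (epigraph \<Psi>)" and cv: "convex (epigraph \<Psi>)"
    using cpc unfolding closed_proper_convex_def by auto
  have "(s, t) \<notin> epigraph \<Psi>" using assms(2) unfolding epigraph_def by simp
  from separating_hyperplane_closed_point[OF cv cl this]
  obtain w b where w: "w \<bullet> (s, t) < b" "\<And>z. z \<in> epigraph \<Psi> \<Longrightarrow> b < w \<bullet> z" by blast
  obtain a c where w_eq: "w = (a, c)" by (cases w)
  have sep: "\<And>y r. \<Psi> y \<le> ereal r \<Longrightarrow> b < a \<bullet> y + c * r"
    using w(2) unfolding w_eq epigraph_def by (auto simp: inner_Pair)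
  have "0 \<le> c"
  proof (rule ccontr)
    assume "\<not> 0 \<le> c"
    obtain y0 where "\<Psi> y0 < \<infinity>" using cpc unfolding closed_proper_convex_def by blast
    then obtain r0 where r0: "\<Psi> y0 \<le> ereal r0" by (cases "\<Psi> y0") auto
    define r where "r = max r0 ((b - a \<bullet> y0) / c)"
    have "b < a \<bullet> y0 + c * r" using r0 by (intro sep) (simp add: r_def order_trans)
    moreover have "c * r \<le> c * ((b - a \<bullet> y0) / c)"
      using \<open>\<not> 0 \<le> c\<close> by (intro mult_left_mono_neg) (auto simp: r_def)
    ultimately show False using \<open>\<not> 0 \<le> c\<close> by simp
  qed
  with w(1) sep show ?thesis unfolding w_eq by (auto simp: inner_Pair)
qed

text \<open>The inequality \<open>\<Psi> \<le> \<Psi>\<^sup>*\<^sup>*\<close> at a subgradient of \<open>\<Psi>\<^sup>*\<close>; this is where closedness of \<open>\<Psi>\<close>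
  is needed. A vertical separating hyperplane is tilted using the affine minorant given by \<open>\<Psi>\<^sup>*(u)\<close>.\<close>

lemma esubdiff_conj_le:
  assumes cpc: "closed_proper_convex \<Psi>" and s: "s \<in> esubdiff (conj \<Psi>) u"
    and cu: "conj \<Psi> u = ereal cu"
  shows "\<Psi> s \<le> ereal (u \<bullet> s - cu)"
proof (rule ccontr)
  assume "\<not> \<Psi> s \<le> ereal (u \<bullet> s - cu)"
  then obtain c a b where c: "0 \<le> c" and sep_s: "a \<bullet> s + c * (u \<bullet> s - cu) < b"
    and sep: "\<And>y r. \<Psi> y \<le> ereal r \<Longrightarrow> b < a \<bullet> y + c * r"
    using epigraph_separation[OF cpc] by blast
  have sub: "\<And>v. ereal (cu + (v - u) \<bullet> s) \<le> conj \<Psi> v" using s cu unfolding esubdiff_def by auto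
  note nm = closed_proper_convex_neq_MInf[OF cpc]
  show False
  proof (cases "c = 0")
    case True
    have "conj \<Psi> (u - a) \<le> ereal (cu - b)"
    proof (rule conj_le_ereal[OF _ nm])
      fix y r assume yr: "\<Psi> y = ereal r"
      have "u \<bullet> y - r \<le> cu" using fenchel_young[of \<Psi> y r u, OF yr] cu by simp
      moreover have "b < a \<bullet> y" using sep[of y r] yr True by simp
      ultimately show "(u - a) \<bullet> y - r \<le> cu - b" by (simp add: inner_diff_left)
    qed
    from order_trans[OF sub[of "u - a"] this] have "cu - a \<bullet> s \<le> cu - b"
      by (simp add: inner_diff_left)
    then show False using sep_s True by simp
  next
    case False
    with c have c0: "0 < c" by simp
    have "conj \<Psi> (- (1 / c) *\<^sub>R a) \<le> ereal (- b / c)"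
    proof (rule conj_le_ereal[OF _ nm])
      fix y r assume yr: "\<Psi> y = ereal r"
      have "b < a \<bullet> y + c * r" using sep[of y r] yr by simp
      then have "b / c < (a \<bullet> y) / c + r" using c0 by (simp add: field_simps)
      then show "(- (1 / c) *\<^sub>R a) \<bullet> y - r \<le> - b / c" by simp
    qed
    from order_trans[OF sub[of "- (1 / c) *\<^sub>R a"] this] have "cu + (- (1 / c) *\<^sub>R a - u) \<bullet> s \<le> - b / c" by simp
    moreover have "u \<bullet> s - cu < b / c - (a \<bullet> s) / c" using sep_s c0 by (simp add: field_simps)
    ultimately show False by (simp add: inner_diff_left)
  qed
qed

lemma esubdiff_conj_maximizer:
  assumes cpc: "closed_proper_convex \<Psi>" and s: "s \<in> esubdiff (conj \<Psi>) u"
  obtains cs where "\<Psi> s = ereal cs" "\<forall>y r. \<Psi> y = ereal r \<longrightarrow> u \<bullet> y - r \<le> u \<bullet> s - cs"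
proof -
  have "\<bar>conj \<Psi> u\<bar> \<noteq> \<infinity>" using s unfolding esubdiff_def by simp
  then obtain cu where cu: "conj \<Psi> u = ereal cu" by (cases "conj \<Psi> u") auto
  have le: "\<Psi> s \<le> ereal (u \<bullet> s - cu)" by (rule esubdiff_conj_le[OF cpc s cu])
  moreover have "\<Psi> s \<noteq> -\<infinity>" by (rule closed_proper_convex_neq_MInf[OF cpc])
  ultimately obtain cs where cs: "\<Psi> s = ereal cs" by (cases "\<Psi> s") auto
  have "u \<bullet> y - r \<le> u \<bullet> s - cs" if "\<Psi> y = ereal r" for y r
  proof -
    have "u \<bullet> y - r \<le> cu" using fenchel_young[of \<Psi> y r u, OF that] cu by simp
    moreover have "cs \<le> u \<bullet> s - cu" using le cs by simp
    ultimately show ?thesis by linarith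
  qed
  with cs show ?thesis by (intro that) auto
qed

lemma difference_quotient_tendsto_at_right:
  fixes F :: "'a::real_normed_vector \<Rightarrow> real"
  assumes "(F has_derivative D) (at x)"
  shows "((\<lambda>\<eta>. (F (x + \<eta> *\<^sub>R v) - F x) / \<eta>) \<longlongrightarrow> D v) (at_right 0)"
proof -
  have "((\<lambda>\<eta>::real. x + \<eta> *\<^sub>R v) has_derivative (\<lambda>h. h *\<^sub>R v)) (at 0)"
    by (auto intro!: derivative_eq_intros)
  from has_derivative_compose[OF this] assms
  have "((\<lambda>\<eta>. F (x + \<eta> *\<^sub>R v)) has_derivative (\<lambda>h. D (h *\<^sub>R v))) (at 0)" by simp
  moreover have "(\<lambda>h. D (h *\<^sub>R v)) = (*) (D v)"
    using linear.scaleR[OF has_derivative_linear[OF assms]] by (auto simp: mult.commute)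
  ultimately have "((\<lambda>\<eta>. F (x + \<eta> *\<^sub>R v)) has_field_derivative D v) (at 0)"
    by (simp add: has_field_derivative_def)
  then have "((\<lambda>\<eta>. (F (x + \<eta> *\<^sub>R v) - F x) / \<eta>) \<longlongrightarrow> D v) (at 0)"
    by (simp add: has_field_derivative_iff)
  then show ?thesis by (rule tendsto_mono[OF at_le, rotated]) simp
qed

lemma has_derivative_bregman_le:
  fixes F :: "'a::real_normed_vector \<Rightarrow> real"
  assumes "(F has_derivative D) (at x)"
    and "\<And>\<eta>. 0 < \<eta> \<Longrightarrow> \<eta> < 1 \<Longrightarrow> (1 - \<eta>) * F x + \<eta> * F y - \<eta> * (1 - \<eta>) * c \<le> F (x + \<eta> *\<^sub>R (y - x))"
  shows "F y - F x - D (y - x) \<le> c"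
proof -
  have "F y - F x - (1 - \<eta>) * c \<le> (F (x + \<eta> *\<^sub>R (y - x)) - F x) / \<eta>" if "0 < \<eta>" "\<eta> < 1" for \<eta>
  proof -
    have "\<eta> * (F y - F x - (1 - \<eta>) * c) \<le> F (x + \<eta> *\<^sub>R (y - x)) - F x"
      using assms(2)[OF that] by (simp add: algebra_simps)
    then show ?thesis using that by (simp add: pos_le_divide_eq mult.commute)
  qed
  then have ev: "eventually (\<lambda>\<eta>. F y - F x - (1 - \<eta>) * c \<le> (F (x + \<eta> *\<^sub>R (y - x)) - F x) / \<eta>) (at_right 0)"
    unfolding eventually_at_right_field by (intro exI[of _ 1]) auto
  have "((\<lambda>\<eta>. F y - F x - (1 - \<eta>) * c) \<longlongrightarrow> F y - F x - (1 - 0) * c) (at_right 0)"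
    by (intro tendsto_intros)
  from tendsto_le[OF trivial_limit_at_right_real difference_quotient_tendsto_at_right[OF assms(1)] this ev]
  have "F y - F x - (1 - 0) * c \<le> D (y - x)" .
  then show ?thesis by simp
qed

lemma uniformly_smooth_bregman_le:
  assumes smooth: "uniformly_smooth_on N q L C f" and xy: "x \<in> C" "y \<in> C"
    and fin: "\<And>z. z \<in> C \<Longrightarrow> f z = ereal (real_of_ereal (f z))"
    and seg: "\<And>\<eta>. 0 \<le> \<eta> \<Longrightarrow> \<eta> \<le> 1 \<Longrightarrow> x + \<eta> *\<^sub>R (y - x) \<in> C"
    and der: "((\<lambda>z. real_of_ereal (f z)) has_derivative D) (at x)"
  shows "real_of_ereal (f y) - real_of_ereal (f x) - D (y - x) \<le> L / q * N (y - x) powr q"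
proof (rule has_derivative_bregman_le[OF der])
  fix \<eta> :: real assume \<eta>: "0 < \<eta>" "\<eta> < 1"
  define z where "z = x + \<eta> *\<^sub>R (y - x)"
  obtain fx fy fz where f_eq: "f x = ereal fx" "f y = ereal fy" "f z = ereal fz"
    using fin xy seg[of \<eta>] \<eta> unfolding z_def by (metis less_eq_real_def)
  have "\<forall>\<theta>\<in>{0..1}. ereal (1 - \<theta>) * f x + ereal \<theta> * f y
      - ereal (L / q * \<theta> * (1 - \<theta>) * N (y - x) powr q) \<le> f (x + \<theta> *\<^sub>R (y - x))"
    using smooth xy unfolding uniformly_smooth_on_def by blast
  then have "ereal (1 - \<eta>) * f x + ereal \<eta> * f y - ereal (L / q * \<eta> * (1 - \<eta>) * N (y - x) powr q) \<le> f z"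
    using \<eta> unfolding z_def by simp
  then show "(1 - \<eta>) * real_of_ereal (f x) + \<eta> * real_of_ereal (f y)
      - \<eta> * (1 - \<eta>) * (L / q * N (y - x) powr q) \<le> real_of_ereal (f (x + \<eta> *\<^sub>R (y - x)))"
    unfolding z_def[symmetric] f_eq by (simp add: algebra_simps)
qed

lemma powr_le_powr_of_powr_le:
  fixes d b p q :: real
  assumes "0 \<le> d" "0 < p" "0 \<le> q" "d powr p \<le> b"
  shows "d powr q \<le> b powr (q / p)"
proof -
  have "d powr q = (d powr p) powr (q / p)" using assms by (simp add: powr_powr)
  also have "\<dots> \<le> b powr (q / p)" using assms by (intro powr_mono2) auto
  finally show ?thesis .
qed

lemma epowr_mono:
  assumes "0 \<le> a" "0 \<le> r" "ereal a \<le> G"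
  shows "ereal (a powr r) \<le> epowr G r"
proof (cases G)
  case (real g)
  with assms have "a powr r \<le> g powr r" by (intro powr_mono2) auto
  then show ?thesis using real unfolding epowr_def by simp
qed (use assms in \<open>auto simp: epowr_def\<close>)

lemma gap_ge:
  assumes "f x = ereal fx" "\<Psi> x = ereal cx" "\<Psi> s = ereal cs"
  shows "ereal (cx - cs + g \<bullet> (x - s)) \<le> gap f \<Psi> x g"
proof -
  have "ereal (cx - cs + g \<bullet> (x - s)) = ereal fx + ereal cx + ereal (g \<bullet> x - fx) + ereal ((- g) \<bullet> s - cs)"
    by (simp add: inner_diff_right)
  also have "\<dots> \<le> f x + \<Psi> x + conj f g + conj \<Psi> (- g)"
    using assms fenchel_young[of f x fx g] fenchel_young[of \<Psi> s cs "- g"] by (intro add_mono) auto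
  finally show ?thesis unfolding gap_def .
qed

lemma Dcal_le_uniformly_smooth:
  assumes \<Psi>_cpc: "closed_proper_convex \<Psi>" and smooth: "uniformly_smooth_on N q L (edom \<Psi>) f"
    and N: "is_norm N" and f_fin: "\<And>y. y \<in> edom \<Psi> \<Longrightarrow> f y = ereal (real_of_ereal (f y))"
    and der: "((\<lambda>y. real_of_ereal (f y)) has_derivative (\<lambda>h. gradf x \<bullet> h)) (at x)"
    and x: "x \<in> edom \<Psi>" and s: "s \<in> edom \<Psi>" and \<theta>: "0 \<le> \<theta>" "\<theta> \<le> 1"
  shows "Dcal f gradf \<Psi> x s \<theta> \<le> ereal (L / q * \<theta> powr q * N (s - x) powr q)"
proof -
  define x\<theta> where "x\<theta> = x + \<theta> *\<^sub>R (s - x)"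
  have x\<theta>_dom: "x\<theta> \<in> edom \<Psi>" unfolding x\<theta>_def using edom_segment[OF \<Psi>_cpc x s \<theta>] .
  have "x + \<eta> *\<^sub>R (x\<theta> - x) \<in> edom \<Psi>" if "0 \<le> \<eta>" "\<eta> \<le> 1" for \<eta>
    using edom_segment[OF \<Psi>_cpc x s, of "\<eta> * \<theta>"] that \<theta> unfolding x\<theta>_def by (simp add: mult_le_one)
  from uniformly_smooth_bregman_le[OF smooth x x\<theta>_dom f_fin this der]
  have breg: "real_of_ereal (f x\<theta>) - real_of_ereal (f x) - \<theta> * (gradf x \<bullet> (s - x))
      \<le> L / q * (\<theta> powr q * N (s - x) powr q)"
    using N \<theta> unfolding x\<theta>_def is_norm_def by (simp add: powr_mult)
  obtain fx f\<theta> where f_eq: "f x = ereal fx" "f x\<theta> = ereal f\<theta>" using f_fin x x\<theta>_dom by metis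
  obtain cx cs c\<theta> where \<Psi>_eq: "\<Psi> x = ereal cx" "\<Psi> s = ereal cs" "\<Psi> x\<theta> = ereal c\<theta>"
    using closed_proper_convex_finite[OF \<Psi>_cpc] x s x\<theta>_dom by metis
  have "c\<theta> \<le> (1 - \<theta>) * cx + \<theta> * cs"
    using closed_proper_convex_segment_le[OF \<Psi>_cpc \<Psi>_eq(1,2) \<theta>] \<Psi>_eq(3) unfolding x\<theta>_def by simp
  moreover have "Dcal f gradf \<Psi> x s \<theta> = ereal (f\<theta> - fx - \<theta> * (gradf x \<bullet> (s - x)) + c\<theta> - (1 - \<theta>) * cx - \<theta> * cs)"
    unfolding Dcal_def bregman_def x\<theta>_def[symmetric] f_eq \<Psi>_eq by (simp add: x\<theta>_def)
  ultimately show ?thesis using breg f_eq by simp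
qed

lemma growth_property_of_power_bound:
  assumes f_cpc: "closed_proper_convex f" and \<Psi>_cpc: "closed_proper_convex \<Psi>"
    and A1: "\<forall>x \<in> edom \<Psi>. x \<in> interior (edom f) \<and>
               ((\<lambda>y. real_of_ereal (f y)) has_derivative (\<lambda>h. gradf x \<bullet> h)) (at x)"
    and N: "is_norm N" and q: "0 < q" and p: "0 < p" and L: "0 \<le> L" and K: "0 < K"
    and smooth: "uniformly_smooth_on N q L (edom \<Psi>) f"
    and bound: "\<And>x s. x \<in> edom \<Psi> \<Longrightarrow> s \<in> esubdiff (conj \<Psi>) (- gradf x) \<Longrightarrow>
      N (s - x) powr p \<le> K * (real_of_ereal (\<Psi> x) - real_of_ereal (\<Psi> s) + gradf x \<bullet> (x - s))"
  shows "growth_property f gradf \<Psi> q (q / p) (L * K powr (q / p))"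
  unfolding growth_property_def
proof (intro ballI)
  fix x s and \<theta> :: real assume x: "x \<in> edom \<Psi>" and s: "s \<in> esubdiff (conj \<Psi>) (- gradf x)" and \<theta>: "\<theta> \<in> {0..1}"
  obtain cs where cs: "\<Psi> s = ereal cs" by (rule esubdiff_conj_maximizer[OF \<Psi>_cpc s])
  then have s_dom: "s \<in> edom \<Psi>" unfolding edom_def by simp
  have f_fin: "\<And>y. y \<in> edom \<Psi> \<Longrightarrow> f y = ereal (real_of_ereal (f y))"
    using A1 interior_subset closed_proper_convex_finite[OF f_cpc] by blast
  obtain cx fx where cx: "\<Psi> x = ereal cx" and fx: "f x = ereal fx"
    using closed_proper_convex_finite[OF \<Psi>_cpc x] f_fin[OF x] by metis
  define a where "a = cx - cs + gradf x \<bullet> (x - s)"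
  have Na: "N (s - x) powr p \<le> K * a" using bound[OF x s] cx cs unfolding a_def by simp
  then have "0 \<le> a" using K by (metis order_trans powr_ge_zero zero_le_mult_iff not_less)
  have N0: "0 \<le> N (s - x)" using N unfolding is_norm_def by blast
  have "Dcal f gradf \<Psi> x s \<theta> \<le> ereal (L / q * \<theta> powr q * N (s - x) powr q)"
    using A1 x \<theta> by (intro Dcal_le_uniformly_smooth[OF \<Psi>_cpc smooth N f_fin _ x s_dom]) auto
  also have "\<dots> \<le> ereal (L * K powr (q / p) * \<theta> powr q / q * a powr (q / p))"
  proof -
    have "N (s - x) powr q \<le> (K * a) powr (q / p)" by (rule powr_le_powr_of_powr_le[OF N0 p _ Na]) (use q in simp)
    then have "N (s - x) powr q \<le> K powr (q / p) * a powr (q / p)" using K \<open>0 \<le> a\<close> by (simp add: powr_mult)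
    then show ?thesis using L q by (simp add: field_simps mult_left_mono)
  qed
  also have "\<dots> = ereal (L * K powr (q / p) * \<theta> powr q / q) * ereal (a powr (q / p))" by simp
  also have "\<dots> \<le> ereal (L * K powr (q / p) * \<theta> powr q / q) * epowr (gap f \<Psi> x (gradf x)) (q / p)"
    using epowr_mono[OF \<open>0 \<le> a\<close> _ gap_ge[of f x fx \<Psi> cx s cs "gradf x", OF fx cx cs, folded a_def]] L K q p
    by (intro ereal_mult_left_mono) auto
  finally show "Dcal f gradf \<Psi> x s \<theta> \<le> ereal (L * K powr (q / p) * \<theta> powr q / q) * epowr (gap f \<Psi> x (gradf x)) (q / p)" .
qed

lemma uniformly_convex_fn_power_bound:
  assumes \<Psi>_cpc: "closed_proper_convex \<Psi>" and uc: "uniformly_convex_fn_on N p \<mu> (edom \<Psi>) \<Psi>"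
    and N: "is_norm N" and p: "0 < p" and \<mu>: "0 < \<mu>"
    and x: "x \<in> edom \<Psi>" and s: "s \<in> esubdiff (conj \<Psi>) (- g)"
  shows "N (s - x) powr p \<le> p / \<mu> * (real_of_ereal (\<Psi> x) - real_of_ereal (\<Psi> s) + g \<bullet> (x - s))"
proof -
  obtain cs where cs: "\<Psi> s = ereal cs" and opt: "\<forall>y r. \<Psi> y = ereal r \<longrightarrow> (- g) \<bullet> y - r \<le> (- g) \<bullet> s - cs"
    by (rule esubdiff_conj_maximizer[OF \<Psi>_cpc s])
  then have s_dom: "s \<in> edom \<Psi>" unfolding edom_def by simp
  obtain cx where cx: "\<Psi> x = ereal cx" using closed_proper_convex_finite[OF \<Psi>_cpc x] by blast
  define a where "a = cx - cs + g \<bullet> (x - s)"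
  have "\<mu> / p * N (x - s) powr p \<le> a"
  proof (rule field_le_mult_one_interval)
    fix z :: real assume z: "0 < z" "z < 1"
    define \<eta> where "\<eta> = 1 - z"
    define y where "y = s + \<eta> *\<^sub>R (x - s)"
    have "\<eta> \<in> {0..1}" using z unfolding \<eta>_def by simp
    with uc s_dom x have "\<Psi> y \<le> ereal (1 - \<eta>) * \<Psi> s + ereal \<eta> * \<Psi> x - ereal (\<mu> / p * \<eta> * (1 - \<eta>) * N (x - s) powr p)"
      unfolding uniformly_convex_fn_on_def y_def by blast
    then obtain cy where cy: "\<Psi> y = ereal cy" and "cy \<le> z * cs + \<eta> * cx - \<mu> / p * \<eta> * z * N (x - s) powr p"
      using cs cx closed_proper_convex_neq_MInf[OF \<Psi>_cpc, of y] unfolding \<eta>_def by (cases "\<Psi> y") auto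
    moreover have "(- g) \<bullet> y - cy \<le> (- g) \<bullet> s - cs" using opt cy by blast
    moreover have "(- g) \<bullet> y = (- g) \<bullet> s - \<eta> * (g \<bullet> (x - s))" unfolding y_def by (simp add: inner_add_right)
    ultimately have "\<eta> * (z * (\<mu> / p * N (x - s) powr p)) \<le> \<eta> * a"
      unfolding a_def \<eta>_def by (simp add: algebra_simps)
    moreover have "0 < \<eta>" using z unfolding \<eta>_def by simp
    ultimately show "z * (\<mu> / p * N (x - s) powr p) \<le> a" by (rule mult_left_le_imp_le)
  qed
  then show ?thesis
    using p \<mu> cx cs is_norm_minus_commute[OF N, of x s] unfolding a_def by (simp add: field_simps)
qed

text \<open>Uniform convexity of \<open>C\<close> leaves room for a ball of radius \<open>(\<mu>/p) \<eta>(1 - \<eta>) \<parallel>x - s\<parallel>\<^sup>p\<close> around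
  \<open>s + \<eta>(x - s)\<close>; optimality of \<open>s\<close> against every point of that ball yields the dual norm of \<open>g\<close>.\<close>

lemma uniformly_convex_set_power_bound:
  assumes ucs: "uniformly_convex_set N p \<mu> C" and N: "is_norm N" and p: "0 < p" and \<mu>: "0 < \<mu>"
    and l: "0 < l" "l \<le> dual_norm N g" and x: "x \<in> C" and s: "s \<in> C"
    and opt: "\<And>y. y \<in> C \<Longrightarrow> g \<bullet> s \<le> g \<bullet> y"
  shows "N (s - x) powr p \<le> p / (l * \<mu>) * (g \<bullet> (x - s))"
proof -
  define a where "a = g \<bullet> (x - s)"
  have "0 \<le> a" using opt[OF x] unfolding a_def by (simp add: inner_diff_right)
  have "l * (\<mu> / p * N (x - s) powr p) \<le> a"
  proof (rule field_le_mult_one_interval)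
    fix z :: real assume z: "0 < z" "z < 1"
    define \<eta> where "\<eta> = 1 - z"
    define k where "k = z * (\<mu> / p * N (x - s) powr p)"
    have "0 \<le> k" using z p \<mu> unfolding k_def by simp
    have k_le: "k * (g \<bullet> w) \<le> a" if "N w \<le> 1" for w
    proof -
      have "N (- w) \<le> 1" using that is_norm_minus[OF N] by simp
      moreover have "\<eta> \<in> {0..1}" using z unfolding \<eta>_def by simp
      ultimately have "s + \<eta> *\<^sub>R (x - s) + (\<mu> / p * \<eta> * (1 - \<eta>) * N (x - s) powr p) *\<^sub>R (- w) \<in> C"
        using ucs s x unfolding uniformly_convex_set_def by blast
      from opt[OF this] have "\<eta> * (k * (g \<bullet> w)) \<le> \<eta> * a"
        unfolding a_def k_def \<eta>_def by (simp add: inner_add_right inner_diff_right algebra_simps)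
      moreover have "0 < \<eta>" using z unfolding \<eta>_def by simp
      ultimately show ?thesis by (rule mult_left_le_imp_le)
    qed
    have "k * dual_norm N g \<le> a"
    proof (cases "k = 0")
      case True
      with \<open>0 \<le> a\<close> show ?thesis by simp
    next
      case False
      with \<open>0 \<le> k\<close> have "0 < k" by simp
      with k_le have "dual_norm N g \<le> a / k"
        by (intro dual_norm_least[OF N]) (simp add: pos_le_divide_eq mult.commute)
      with \<open>0 < k\<close> show ?thesis by (simp add: pos_le_divide_eq mult.commute)
    qed
    moreover have "k * l \<le> k * dual_norm N g" using l(2) \<open>0 \<le> k\<close> by (rule mult_left_mono)
    ultimately show "z * (l * (\<mu> / p * N (x - s) powr p)) \<le> a" unfolding k_def by (simp add: algebra_simps)
  qed
  then show ?thesis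
    using p \<mu> l is_norm_minus_commute[OF N, of x s] unfolding a_def by (simp add: field_simps)
qed

lemma esubdiff_conj_indicator:
  assumes "closed_proper_convex (indicator_fn C)" "s \<in> esubdiff (conj (indicator_fn C)) (- g)"
  shows "s \<in> C \<and> (\<forall>y\<in>C. g \<bullet> s \<le> g \<bullet> y)"
proof -
  obtain cs where cs: "indicator_fn C s = ereal cs"
    and opt: "\<forall>y r. indicator_fn C y = ereal r \<longrightarrow> (- g) \<bullet> y - r \<le> (- g) \<bullet> s - cs"
    by (rule esubdiff_conj_maximizer[OF assms])
  then have "s \<in> C" "cs = 0" unfolding indicator_fn_def by (auto split: if_splits)
  moreover have "g \<bullet> s \<le> g \<bullet> y" if "y \<in> C" for y
    using opt[rule_format, of y 0] that \<open>cs = 0\<close> unfolding indicator_fn_def by simp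
  ultimately show ?thesis by blast
qed

lemma uniformly_convex_set_indicator_power_bound:
  assumes cpc: "closed_proper_convex (indicator_fn C)" and ucs: "uniformly_convex_set N p \<mu> C"
    and N: "is_norm N" and p: "0 < p" and \<mu>: "0 < \<mu>" and l: "0 < (INF y\<in>C. dual_norm N (gradf y))"
    and x: "x \<in> edom (indicator_fn C)" and s: "s \<in> esubdiff (conj (indicator_fn C)) (- gradf x)"
  shows "N (s - x) powr p \<le> p / ((INF y\<in>C. dual_norm N (gradf y)) * \<mu>) *
    (real_of_ereal (indicator_fn C x) - real_of_ereal (indicator_fn C s) + gradf x \<bullet> (x - s))"
proof -
  have xC: "x \<in> C" using x unfolding edom_def indicator_fn_def by (auto split: if_splits)
  have sC: "s \<in> C" and opt: "\<And>y. y \<in> C \<Longrightarrow> gradf x \<bullet> s \<le> gradf x \<bullet> y"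
    using esubdiff_conj_indicator[OF cpc s] by auto
  have "(INF y\<in>C. dual_norm N (gradf y)) \<le> dual_norm N (gradf x)"
    using xC dual_norm_nonneg[OF N] by (intro cINF_lower bdd_belowI[of _ 0]) auto
  from uniformly_convex_set_power_bound[OF ucs N p \<mu> l this xC sC opt] xC sC
  show ?thesis unfolding indicator_fn_def by simp
qed

theorem proposition4:
  fixes f \<Psi> :: "real^'n::finite \<Rightarrow> ereal"
    and gradf :: "real^'n \<Rightarrow> real^'n"
    and N :: "real^'n \<Rightarrow> real"
    and q L p \<mu> :: real
  assumes f_cpc: "closed_proper_convex f"
    and \<Psi>_cpc: "closed_proper_convex \<Psi>"
    and A1: "\<forall>x \<in> edom \<Psi>. x \<in> interior (edom f) \<and>
               ((\<lambda>y. real_of_ereal (f y)) has_derivative (\<lambda>h. gradf x \<bullet> h)) (at x)"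
    and A2: "\<forall>x \<in> edom \<Psi>. esubdiff (conj \<Psi>) (- gradf x) \<noteq> {}"
    and N_norm: "is_norm N"
    and q: "1 < q" "q \<le> 2"
    and L: "0 < L"
    and smooth: "uniformly_smooth_on N q L (edom \<Psi>) f"
    and p: "2 \<le> p"
    and \<mu>: "0 < \<mu>"
  shows "(uniformly_convex_fn_on N p \<mu> (edom \<Psi>) \<Psi> \<longrightarrow>
            growth_property f gradf \<Psi> q (q / p) (L * (p / \<mu>) powr (q / p)))
       \<and> (\<forall>C. \<Psi> = indicator_fn C \<and> uniformly_convex_set N p \<mu> C
              \<and> (INF x\<in>C. dual_norm N (gradf x)) > 0 \<longrightarrow>
            growth_property f gradf \<Psi> q (q / p)
              (L * (p / ((INF x\<in>C. dual_norm N (gradf x)) * \<mu>)) powr (q / p)))"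
proof -
  have qpL: "0 < q" "0 < p" "0 \<le> L" using p q L by auto
  note growth = growth_property_of_power_bound[OF f_cpc \<Psi>_cpc A1 N_norm qpL _ smooth]
  show ?thesis
  proof (intro conjI allI impI)
    assume "uniformly_convex_fn_on N p \<mu> (edom \<Psi>) \<Psi>"
    from uniformly_convex_fn_power_bound[OF \<Psi>_cpc this N_norm qpL(2) \<mu>]
    show "growth_property f gradf \<Psi> q (q / p) (L * (p / \<mu>) powr (q / p))"
      using qpL \<mu> by (intro growth) auto
  next
    fix C
    assume "\<Psi> = indicator_fn C \<and> uniformly_convex_set N p \<mu> C \<and> (INF x\<in>C. dual_norm N (gradf x)) > 0"
    with uniformly_convex_set_indicator_power_bound[of C N p \<mu> gradf] \<Psi>_cpc N_norm qpL(2) \<mu>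
    show "growth_property f gradf \<Psi> q (q / p) (L * (p / ((INF x\<in>C. dual_norm N (gradf x)) * \<mu>)) powr (q / p))"
      by (intro growth) auto
  qed
qed

end
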